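(* Let $G$ be a connected bipartite graph with color classes $E$ and $V$. Let $\mathbf f,\mathbf g$ be hypertrees of $(V,E)$ with $\mathbf g=\mathbf f-\mathbf i_{\{e\}}+\mathbf i_{\{e'\}}$ for some $e\ne e'$ in $E$, and let $l$ be the line segment in $P_E$ from $\mathbf f^+$ to $\mathbf g^+$. Let $\Gamma$ be a spanning tree inducing $\mathbf f$ and suppose $\mathbf f^+$ is an interior point of the Minkowski cell $M_\Gamma$. Let $\varepsilon_1$ be the first edge of the unique path in $\Gamma$ from $e$ to $e'$. Then $l$ leaves $M_\Gamma$ through the codimension one stratum of the boundary of $M_\Gamma$ corresponding to removing $\varepsilon_1$ from $\Gamma$, i.e. at the point where $l$ exits $M_\Gamma$, the weight of $\varepsilon_1$ in the direct sum representation is $0$.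
   Context: A hypertree of $(V,E)$ is $\mathbf f\colon E\to\mathbf N$ such that some spanning tree $\Gamma$ of $G$ has degree $\mathbf f(e)+1$ at each $e\in E$ ($\Gamma$ induces $\mathbf f$). $\mathbf i_S$ is an indicator vector and $\mathbf f^+=\mathbf f+\frac1{|E|}\mathbf i_E$. For $v\in V$, $\Delta_v=\operatorname{conv}\{\mathbf i_{\{e\}}\mid ev\in G\}$ and $P_E=\sum_{v\in V}\Delta_v\subset\mathbf R^E$ (Minkowski sum). For a spanning tree $\Gamma$, $\Delta^\Gamma_v=\operatorname{conv}\{\mathbf i_{\{e\}}\mid ev\in\Gamma\}$ and $M_\Gamma=\sum_{v\in V}\Delta^\Gamma_v\subset P_E$; this sum is direct, so each point of $M_\Gamma$ is uniquely described by non-negative weights on the edges of $\Gamma$ (barycentric coordinates in each $\Delta^\Gamma_v$, summing to $1$ at each $v$), and the codimension one stratum corresponding to an edge $\varepsilon$ of $\Gamma$ is the set of points of $M_\Gamma$ where the weight of $\varepsilon$ is $0$. *)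

theory Defs
  imports "HOL-Analysis.Analysis"
begin

text \<open>A bipartite graph with colour classes E (the finite type 'e) and V (the finite
 type 'v) is a set of edges G :: ('e \<times> 'v) set. Vertices of the graph are elements of
 'e + 'v.\<close>

definition bip_adj :: "('e \<times> 'v) set \<Rightarrow> ('e + 'v) \<Rightarrow> ('e + 'v) \<Rightarrow> bool" where
  "bip_adj G a b \<longleftrightarrow> (\<exists>e v. (e, v) \<in> G \<and>
      ((a = Inl e \<and> b = Inr v) \<or> (a = Inr v \<and> b = Inl e)))"

definition bip_connected :: "('e \<times> 'v) set \<Rightarrow> bool" where
  "bip_connected G \<longleftrightarrow> (\<forall>a b. (a, b) \<in> {(x, y). bip_adj G x y}\<^sup>*)"

text \<open>Spanning tree: a connected spanning subgraph that is acyclic, i.e. every edge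
 is a bridge (removing it disconnects the subgraph).\<close>
definition spanning_tree :: "('e \<times> 'v) set \<Rightarrow> ('e \<times> 'v) set \<Rightarrow> bool" where
  "spanning_tree G \<Gamma> \<longleftrightarrow> \<Gamma> \<subseteq> G \<and> bip_connected \<Gamma> \<and>
      (\<forall>\<epsilon>\<in>\<Gamma>. \<not> bip_connected (\<Gamma> - {\<epsilon>}))"

definition deg_E :: "('e \<times> 'v) set \<Rightarrow> 'e \<Rightarrow> nat" where
  "deg_E \<Gamma> e = card {v. (e, v) \<in> \<Gamma>}"

definition induces :: "('e \<times> 'v) set \<Rightarrow> ('e \<Rightarrow> nat) \<Rightarrow> bool" where
  "induces \<Gamma> f \<longleftrightarrow> (\<forall>e. deg_E \<Gamma> e = f e + 1)"

definition hypertree :: "('e::finite \<times> 'v::finite) set \<Rightarrow> ('e \<Rightarrow> nat) \<Rightarrow> bool" where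
  "hypertree G f \<longleftrightarrow> (\<exists>\<Gamma>. spanning_tree G \<Gamma> \<and> induces \<Gamma> f)"

definition fplus :: "('e::finite \<Rightarrow> nat) \<Rightarrow> real ^ 'e" where
  "fplus f = (\<chi> e. real (f e) + 1 / real CARD('e))"

definition Delta :: "('e::finite \<times> 'v) set \<Rightarrow> 'v \<Rightarrow> (real ^ 'e) set" where
  "Delta \<Gamma> v = convex hull {axis e 1 | e. (e, v) \<in> \<Gamma>}"

definition Mcell :: "('e::finite \<times> 'v::finite) set \<Rightarrow> (real ^ 'e) set" where
  "Mcell \<Gamma> = {\<Sum>v\<in>UNIV. x v | x. \<forall>v. x v \<in> Delta \<Gamma> v}"

text \<open>Direct-sum description: w gives barycentric coordinates (weights on the edges of
 \<Gamma>, non-negative, summing to 1 at each v) representing the point x of M_\<Gamma>.\<close>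
definition weights_of :: "('e::finite \<times> 'v::finite) set \<Rightarrow> ('e \<times> 'v \<Rightarrow> real) \<Rightarrow> real ^ 'e \<Rightarrow> bool" where
  "weights_of \<Gamma> w x \<longleftrightarrow>
     (\<forall>\<epsilon>\<in>\<Gamma>. w \<epsilon> \<ge> 0) \<and> (\<forall>\<epsilon>. \<epsilon> \<notin> \<Gamma> \<longrightarrow> w \<epsilon> = 0) \<and>
     (\<forall>v. (\<Sum>e\<in>{e. (e, v) \<in> \<Gamma>}. w (e, v)) = 1) \<and>
     x = (\<Sum>v\<in>UNIV. \<Sum>e\<in>{e. (e, v) \<in> \<Gamma>}. w (e, v) *\<^sub>R axis e 1)"

definition is_path :: "('e \<times> 'v) set \<Rightarrow> ('e + 'v) list \<Rightarrow> ('e + 'v) \<Rightarrow> ('e + 'v) \<Rightarrow> bool" where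
  "is_path \<Gamma> p a b \<longleftrightarrow> p \<noteq> [] \<and> distinct p \<and> hd p = a \<and> last p = b \<and>
     (\<forall>i. Suc i < length p \<longrightarrow> bip_adj \<Gamma> (p ! i) (p ! Suc i))"

end

theory Submission
  imports Defs
begin

text \<open>Cut an edge (a, b) of the spanning tree \<Gamma> and let A be the component of a.
 For any weights w representing a point x of M_\<Gamma>, the coordinates of x summed over the
 E-vertices of A equal the number of V-vertices of A plus w(a, b): each V-vertex of A spends
 its unit weight inside A, and (a, b) is the only edge of \<Gamma> leaving A. For x = f^+, whose
 coordinates are integers plus 1/|E|, this forces w(a, b) = |A \<inter> E| / |E|. These components
 grow along the path from e to e', so its first edge \<epsilon>1 carries the least weight c among the
 edges the path traverses from E to V. Pushing c units of weight along the path realises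
 f^+ + c (i_e' - i_e) in M_\<Gamma>, while the cut identity for \<epsilon>1 shows that at parameter t of l
 every representation gives \<epsilon>1 the weight c - t. Hence l leaves M_\<Gamma> at t = c, where \<epsilon>1
 has weight 0.\<close>

lemma weights_of_iff:
  fixes \<Gamma> :: "('e::finite \<times> 'v::finite) set"
  shows "weights_of \<Gamma> w x \<longleftrightarrow> (\<forall>\<epsilon>\<in>\<Gamma>. 0 \<le> w \<epsilon>) \<and> (\<forall>\<epsilon>. \<epsilon> \<notin> \<Gamma> \<longrightarrow> w \<epsilon> = 0) \<and>
     (\<forall>v. (\<Sum>e\<in>UNIV. w (e, v)) = 1) \<and> (\<forall>k. x $ k = (\<Sum>v\<in>UNIV. w (k, v)))"
proof (cases "\<forall>\<epsilon>. \<epsilon> \<notin> \<Gamma> \<longrightarrow> w \<epsilon> = 0")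
  case True
  have row: "(\<Sum>e\<in>{e. (e, v) \<in> \<Gamma>}. w (e, v)) = (\<Sum>e\<in>UNIV. w (e, v))" for v
    by (rule sum.mono_neutral_left) (use True in auto)
  have inner: "(\<Sum>e\<in>{e. (e, v) \<in> \<Gamma>}. w (e, v) * (if k = e then 1 else 0))
      = (if (k, v) \<in> \<Gamma> then w (k, v) else 0)" for k v
  proof -
    have "(\<Sum>e\<in>{e. (e, v) \<in> \<Gamma>}. w (e, v) * (if k = e then 1 else 0))
        = (\<Sum>e\<in>{e. (e, v) \<in> \<Gamma>}. if k = e then w (k, v) else 0)"
      by (rule sum.cong) auto
    then show ?thesis by (simp add: sum.delta)
  qed
  have coord: "(\<Sum>v\<in>UNIV. \<Sum>e\<in>{e. (e, v) \<in> \<Gamma>}. w (e, v) *\<^sub>R axis e (1::real)) $ k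
      = (\<Sum>v\<in>UNIV. w (k, v))" for k
  proof -
    have "(\<Sum>v\<in>UNIV. \<Sum>e\<in>{e. (e, v) \<in> \<Gamma>}. w (e, v) *\<^sub>R axis e (1::real)) $ k
        = (\<Sum>v\<in>UNIV. if (k, v) \<in> \<Gamma> then w (k, v) else 0)"
      by (simp add: sum_component axis_def inner)
    also have "\<dots> = (\<Sum>v\<in>UNIV. w (k, v))"
      by (rule sum.cong) (use True in auto)
    finally show ?thesis .
  qed
  show ?thesis
    unfolding weights_of_def row vec_eq_iff coord using True by auto
qed (auto simp: weights_of_def)

lemma weights_of_nonneg:
  fixes \<Gamma> :: "('e::finite \<times> 'v::finite) set"
  assumes "weights_of \<Gamma> w x" shows "0 \<le> w \<epsilon>"
  using assms by (cases \<epsilon>) (auto simp: weights_of_def)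

lemma weights_of_le_one:
  fixes \<Gamma> :: "('e::finite \<times> 'v::finite) set"
  assumes "weights_of \<Gamma> w x" shows "w (a, b) \<le> 1"
proof -
  have "w (a, b) \<le> (\<Sum>e\<in>UNIV. w (e, b))"
    by (rule member_le_sum) (use weights_of_nonneg[OF assms] in auto)
  with assms show ?thesis by (simp add: weights_of_iff)
qed

lemma Mcell_iff_weights_of:
  fixes \<Gamma> :: "('e::finite \<times> 'v::finite) set"
  shows "x \<in> Mcell \<Gamma> \<longleftrightarrow> (\<exists>w. weights_of \<Gamma> w x)"
proof
  assume "x \<in> Mcell \<Gamma>"
  then obtain xv where xv: "\<forall>v. xv v \<in> Delta \<Gamma> v" and x: "x = (\<Sum>v\<in>UNIV. xv v)"
    unfolding Mcell_def by blast
  let ?ax = "\<lambda>e. axis e (1::real)"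
  have inj: "inj_on ?ax S" for S
    by (auto simp: inj_on_def axis_eq_axis)
  have "{axis e (1::real) | e. (e, v) \<in> \<Gamma>} = ?ax ` {e. (e, v) \<in> \<Gamma>}" for v
    by auto
  then have "\<forall>v. \<exists>u. (\<forall>y\<in>?ax ` {e. (e, v) \<in> \<Gamma>}. 0 \<le> u y) \<and>
      sum u (?ax ` {e. (e, v) \<in> \<Gamma>}) = 1 \<and> (\<Sum>y\<in>?ax ` {e. (e, v) \<in> \<Gamma>}. u y *\<^sub>R y) = xv v"
    using xv unfolding Delta_def by (subst (asm) convex_hull_finite) auto
  from choice[OF this] obtain U where U: "\<forall>v. (\<forall>y\<in>?ax ` {e. (e, v) \<in> \<Gamma>}. 0 \<le> U v y) \<and>
      sum (U v) (?ax ` {e. (e, v) \<in> \<Gamma>}) = 1 \<and> (\<Sum>y\<in>?ax ` {e. (e, v) \<in> \<Gamma>}. U v y *\<^sub>R y) = xv v"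
    by (elim exE)
  define w where "w = (\<lambda>(e, v). if (e, v) \<in> \<Gamma> then U v (?ax e) else 0)"
  have row: "(\<Sum>e\<in>{e. (e, v) \<in> \<Gamma>}. w (e, v)) = 1" for v
  proof -
    have "(\<Sum>e\<in>{e. (e, v) \<in> \<Gamma>}. w (e, v)) = (\<Sum>e\<in>{e. (e, v) \<in> \<Gamma>}. U v (?ax e))"
      by (rule sum.cong) (auto simp: w_def)
    also have "\<dots> = 1" using spec[OF U, of v] by (simp add: sum.reindex[OF inj])
    finally show ?thesis .
  qed
  have point: "(\<Sum>e\<in>{e. (e, v) \<in> \<Gamma>}. w (e, v) *\<^sub>R ?ax e) = xv v" for v
  proof -
    have "(\<Sum>e\<in>{e. (e, v) \<in> \<Gamma>}. w (e, v) *\<^sub>R ?ax e) = (\<Sum>e\<in>{e. (e, v) \<in> \<Gamma>}. U v (?ax e) *\<^sub>R ?ax e)"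
      by (rule sum.cong) (auto simp: w_def)
    also have "\<dots> = xv v" using spec[OF U, of v] by (simp add: sum.reindex[OF inj])
    finally show ?thesis .
  qed
  have "weights_of \<Gamma> w x"
    unfolding weights_of_def
  proof (intro conjI allI ballI impI)
    show "0 \<le> w \<epsilon>" if "\<epsilon> \<in> \<Gamma>" for \<epsilon>
      using that spec[OF U, of "snd \<epsilon>"] by (cases \<epsilon>) (auto simp: w_def)
    show "w \<epsilon> = 0" if "\<epsilon> \<notin> \<Gamma>" for \<epsilon>
      using that by (cases \<epsilon>) (auto simp: w_def)
  qed (simp_all add: row point x)
  then show "\<exists>w. weights_of \<Gamma> w x" by blast
next
  assume "\<exists>w. weights_of \<Gamma> w x"
  then obtain w where w: "weights_of \<Gamma> w x" by blast
  let ?xv = "\<lambda>v. \<Sum>e\<in>{e. (e, v) \<in> \<Gamma>}. w (e, v) *\<^sub>R axis e (1::real)"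
  have "?xv v \<in> Delta \<Gamma> v" for v
    unfolding Delta_def
  proof (rule convex_sum)
    show "(\<Sum>e\<in>{e. (e, v) \<in> \<Gamma>}. w (e, v)) = 1" using w by (simp add: weights_of_def)
    show "0 \<le> w (e, v)" for e by (rule weights_of_nonneg[OF w])
    show "axis e 1 \<in> convex hull {axis e 1 |e. (e, v) \<in> \<Gamma>}" if "e \<in> {e. (e, v) \<in> \<Gamma>}" for e
      by (rule hull_inc) (use that in blast)
  qed (simp_all add: convex_convex_hull)
  moreover have "x = (\<Sum>v\<in>UNIV. ?xv v)" using w by (simp add: weights_of_def)
  ultimately show "x \<in> Mcell \<Gamma>" unfolding Mcell_def by blast
qed

definition bip_component :: "('e \<times> 'v) set \<Rightarrow> 'e + 'v \<Rightarrow> ('e + 'v) set" where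
  "bip_component H x = {y. (x, y) \<in> {(a, b). bip_adj H a b}\<^sup>*}"

lemma bip_adj_commute: "bip_adj H a b \<longleftrightarrow> bip_adj H b a"
  unfolding bip_adj_def by blast

lemma bip_component_refl [simp]: "x \<in> bip_component H x"
  by (simp add: bip_component_def)

lemma bip_component_adj: "y \<in> bip_component H x \<Longrightarrow> bip_adj H y z \<Longrightarrow> z \<in> bip_component H x"
  unfolding bip_component_def by (auto intro: rtrancl_into_rtrancl)

lemma bip_component_sym:
  assumes "y \<in> bip_component H x" shows "x \<in> bip_component H y"
proof -
  have "sym {(a, b). bip_adj H a b}"
    by (auto intro: symI simp: bip_adj_commute)
  with assms show ?thesis
    unfolding bip_component_def by (auto dest: symD[OF sym_rtrancl])
qed

lemma bip_component_trans:
  "y \<in> bip_component H x \<Longrightarrow> z \<in> bip_component H y \<Longrightarrow> z \<in> bip_component H x"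
  unfolding bip_component_def by (auto intro: rtrancl_trans)

lemma bip_component_eq: "y \<in> bip_component H x \<Longrightarrow> bip_component H y = bip_component H x"
  by (meson bip_component_sym bip_component_trans subsetI subset_antisym)

lemma bip_component_subsetI:
  assumes "\<And>y z. y \<in> bip_component H x \<Longrightarrow> bip_adj H y z \<Longrightarrow> z \<in> bip_component H' y"
  shows "bip_component H x \<subseteq> bip_component H' x"
proof
  fix z assume "z \<in> bip_component H x"
  then have "(x, z) \<in> {(a, b). bip_adj H a b}\<^sup>*" by (simp add: bip_component_def)
  then show "z \<in> bip_component H' x"
  proof (induction rule: rtrancl_induct)
    case (step y z)
    then have "y \<in> bip_component H x" "bip_adj H y z" by (simp_all add: bip_component_def)
    with assms step.IH show ?case by (blast intro: bip_component_trans)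
  qed simp
qed

lemma bip_component_mono:
  assumes "H \<subseteq> H'" shows "bip_component H x \<subseteq> bip_component H' x"
proof (rule bip_component_subsetI)
  fix y z assume "bip_adj H y z"
  with assms have "bip_adj H' y z" unfolding bip_adj_def by blast
  then show "z \<in> bip_component H' y" by (rule bip_component_adj[OF bip_component_refl])
qed

lemma bip_component_Diff_edge:
  assumes "Inl a \<notin> bip_component H x"
  shows "bip_component H x \<subseteq> bip_component (H - {(a, b)}) x"
proof (rule bip_component_subsetI)
  fix y z assume y: "y \<in> bip_component H x" and yz: "bip_adj H y z"
  have "z \<in> bip_component H x" using bip_component_adj[OF y yz] .
  with y assms have "bip_adj (H - {(a, b)}) y z"
    using yz unfolding bip_adj_def by blast
  then show "z \<in> bip_component (H - {(a, b)}) y"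
    by (rule bip_component_adj[OF bip_component_refl])
qed

lemma bip_connected_iff_component: "bip_connected H \<longleftrightarrow> (\<forall>x. bip_component H x = UNIV)"
  unfolding bip_connected_def bip_component_def by blast

lemma spanning_tree_bridge:
  assumes "spanning_tree G \<Gamma>" and "(a, b) \<in> \<Gamma>"
  shows "Inr b \<notin> bip_component (\<Gamma> - {(a, b)}) (Inl a)"
proof
  assume bridged: "Inr b \<in> bip_component (\<Gamma> - {(a, b)}) (Inl a)"
  have "bip_component \<Gamma> x \<subseteq> bip_component (\<Gamma> - {(a, b)}) x" for x
  proof (rule bip_component_subsetI)
    fix y z assume "bip_adj \<Gamma> y z"
    then consider "bip_adj (\<Gamma> - {(a, b)}) y z" | "y = Inl a" "z = Inr b" | "y = Inr b" "z = Inl a"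
      unfolding bip_adj_def by blast
    then show "z \<in> bip_component (\<Gamma> - {(a, b)}) y"
      by cases (use bridged bip_component_sym bip_component_adj[OF bip_component_refl] in auto)
  qed
  with assms(1) have "bip_connected (\<Gamma> - {(a, b)})"
    unfolding spanning_tree_def bip_connected_iff_component by blast
  with assms show False
    unfolding spanning_tree_def by blast
qed

lemma is_path_adj: "is_path \<Gamma> p x y \<Longrightarrow> Suc i < length p \<Longrightarrow> bip_adj \<Gamma> (p ! i) (p ! Suc i)"
  by (simp add: is_path_def)

lemma is_path_first: "is_path \<Gamma> p x y \<Longrightarrow> p ! 0 = x"
  by (auto simp: is_path_def hd_conv_nth)

lemma is_path_last: "is_path \<Gamma> p x y \<Longrightarrow> p ! (length p - 1) = y"
  by (auto simp: is_path_def last_conv_nth)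

lemma is_path_drop:
  assumes "is_path \<Gamma> p x y" and "k < length p"
  shows "is_path \<Gamma> (drop k p) (p ! k) y"
  using assms by (auto simp: is_path_def hd_drop_conv_nth)

lemma is_path_Inl_first_two_steps:
  assumes q: "is_path \<Gamma> q (Inl a) (Inl b)" and "a \<noteq> b"
  obtains b1 a2 where "Suc 1 < length q" "q ! 1 = Inr b1" "q ! 2 = Inl a2"
    and "(a, b1) \<in> \<Gamma>" "(a2, b1) \<in> \<Gamma>" "a \<noteq> a2"
proof -
  have "q \<noteq> []" and dist: "distinct q" using q by (simp_all add: is_path_def)
  have "length q \<noteq> 1" using is_path_first[OF q] is_path_last[OF q] assms(2) by auto
  with \<open>q \<noteq> []\<close> have "Suc 0 < length q" by (cases q) auto
  from is_path_adj[OF q this] is_path_first[OF q]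
  obtain b1 where q1: "q ! 1 = Inr b1" and "(a, b1) \<in> \<Gamma>"
    by (auto simp: bip_adj_def)
  have "length q \<noteq> 2" using q1 is_path_last[OF q] by auto
  with \<open>Suc 0 < length q\<close> have "Suc 1 < length q" by simp
  from is_path_adj[OF q this] q1
  obtain a2 where q2: "q ! 2 = Inl a2" and "(a2, b1) \<in> \<Gamma>"
    by (auto simp: bip_adj_def numeral_2_eq_2)
  have "q ! 0 \<noteq> q ! 2"
    using nth_eq_iff_index_eq[OF dist, of 0 2] \<open>Suc 1 < length q\<close> \<open>q \<noteq> []\<close> by simp
  then have "a \<noteq> a2" using is_path_first[OF q] q2 by auto
  show ?thesis by (rule that) fact+
qed

lemma is_path_component_Diff_step:
  assumes p: "is_path \<Gamma> p x y" and i: "Suc i < length p" "p ! i = Inl a" "p ! Suc i = Inr b"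
    and jk: "j \<le> k" "k < length p" "k \<le> i \<or> Suc i \<le> j"
  shows "p ! k \<in> bip_component (\<Gamma> - {(a, b)}) (p ! j)"
  using jk
proof (induction k rule: dec_induct)
  case (step l)
  have "distinct p" using p by (simp add: is_path_def)
  moreover have "l \<noteq> i" "l = Suc i \<Longrightarrow> Suc l \<noteq> i" "Suc l < length p" using step by auto
  ultimately have "p ! l \<noteq> p ! i" "p ! l = p ! Suc i \<Longrightarrow> p ! Suc l \<noteq> p ! i"
    using i(1) by (simp_all add: nth_eq_iff_index_eq)
  then have "\<not> (p ! l = Inl a \<and> p ! Suc l = Inr b)" "\<not> (p ! l = Inr b \<and> p ! Suc l = Inl a)"
    using i by auto
  moreover have "bip_adj \<Gamma> (p ! l) (p ! Suc l)" using is_path_adj[OF p] step by simp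
  ultimately have "bip_adj (\<Gamma> - {(a, b)}) (p ! l) (p ! Suc l)"
    unfolding bip_adj_def by blast
  with step show ?case by (auto intro: bip_component_adj)
qed simp

lemma spanning_tree_path_step_separates:
  assumes st: "spanning_tree G \<Gamma>" and p: "is_path \<Gamma> p x y"
    and i: "Suc i < length p" "p ! i = Inl a" "p ! Suc i = Inr b"
  shows "x \<in> bip_component (\<Gamma> - {(a, b)}) (Inl a)"
    and "y \<notin> bip_component (\<Gamma> - {(a, b)}) (Inl a)"
proof -
  have "p ! i \<in> bip_component (\<Gamma> - {(a, b)}) (p ! 0)"
    by (rule is_path_component_Diff_step[OF p i]) (use i in auto)
  then show "x \<in> bip_component (\<Gamma> - {(a, b)}) (Inl a)"
    using i is_path_first[OF p] by (simp add: bip_component_sym)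
  have "bip_adj \<Gamma> (Inl a) (Inr b)" using is_path_adj[OF p i(1)] i by simp
  then have "(a, b) \<in> \<Gamma>" by (simp add: bip_adj_def)
  have "p ! (length p - 1) \<in> bip_component (\<Gamma> - {(a, b)}) (p ! Suc i)"
    by (rule is_path_component_Diff_step[OF p i]) (use i in auto)
  then have "y \<in> bip_component (\<Gamma> - {(a, b)}) (Inr b)"
    using i is_path_last[OF p] by simp
  then show "y \<notin> bip_component (\<Gamma> - {(a, b)}) (Inl a)"
    using spanning_tree_bridge[OF st \<open>(a, b) \<in> \<Gamma>\<close>] bip_component_eq bip_component_sym by metis
qed

lemma spanning_tree_path_first_edge:
  assumes st: "spanning_tree G \<Gamma>" and p: "is_path \<Gamma> p (Inl e) (Inl e')" and "e \<noteq> e'"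
    and v1: "p ! 1 = Inr v1"
  shows "(e, v1) \<in> \<Gamma>" and "Inr v1 \<notin> bip_component (\<Gamma> - {(e, v1)}) (Inl e)"
    and "Inl e' \<notin> bip_component (\<Gamma> - {(e, v1)}) (Inl e)"
proof -
  obtain b1 where "Suc 1 < length p" "p ! 1 = Inr b1" "(e, b1) \<in> \<Gamma>"
    using is_path_Inl_first_two_steps[OF p \<open>e \<noteq> e'\<close>] by blast
  then have first: "Suc 0 < length p" "p ! 0 = Inl e" "p ! Suc 0 = Inr v1" and e1: "(e, v1) \<in> \<Gamma>"
    using v1 is_path_first[OF p] by simp_all
  show "(e, v1) \<in> \<Gamma>" by (fact e1)
  show "Inr v1 \<notin> bip_component (\<Gamma> - {(e, v1)}) (Inl e)"
    by (rule spanning_tree_bridge[OF st e1])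
  show "Inl e' \<notin> bip_component (\<Gamma> - {(e, v1)}) (Inl e)"
    by (rule spanning_tree_path_step_separates(2)[OF st p first])
qed

lemma weights_of_component_sum:
  fixes \<Gamma> :: "('e::finite \<times> 'v::finite) set" and a :: 'e and b :: 'v
  defines "A \<equiv> bip_component (\<Gamma> - {(a, b)}) (Inl a)"
  assumes w: "weights_of \<Gamma> w x" and bridge: "Inr b \<notin> A"
  shows "(\<Sum>k\<in>Inl -` A. x $ k) = real (card (Inr -` A)) + w (a, b)"
proof -
  have outside: "\<And>\<epsilon>. \<epsilon> \<notin> \<Gamma> \<Longrightarrow> w \<epsilon> = 0" and row: "\<And>v. (\<Sum>e\<in>UNIV. w (e, v)) = 1"
    and coord: "\<And>k. x $ k = (\<Sum>v\<in>UNIV. w (k, v))" using w by (auto simp: weights_of_iff)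
  have closed: "z \<in> A" if "y \<in> A" "bip_adj (\<Gamma> - {(a, b)}) y z" for y z
    using that unfolding A_def by (rule bip_component_adj)
  have leaving: "w (k, v) = 0" if "k \<in> Inl -` A" "v \<notin> Inr -` A" "(k, v) \<noteq> (a, b)" for k v
  proof (rule ccontr)
    assume "w (k, v) \<noteq> 0"
    then have "bip_adj (\<Gamma> - {(a, b)}) (Inl k) (Inr v)"
      using outside that(3) unfolding bip_adj_def by blast
    then show False using closed that by auto
  qed
  have entering: "w (k, v) = 0" if "k \<notin> Inl -` A" "v \<in> Inr -` A" for k v
  proof (rule ccontr)
    assume "w (k, v) \<noteq> 0"
    moreover have "(k, v) \<noteq> (a, b)" using that bridge by auto
    ultimately have "bip_adj (\<Gamma> - {(a, b)}) (Inr v) (Inl k)"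
      using outside unfolding bip_adj_def by blast
    then show False using closed that by auto
  qed
  have "(\<Sum>k\<in>Inl -` A. x $ k) = (\<Sum>k\<in>Inl -` A. \<Sum>v\<in>Inr -` A. w (k, v)) + (\<Sum>k\<in>Inl -` A. \<Sum>v\<in>- Inr -` A. w (k, v))"
    unfolding coord sum.distrib[symmetric]
    by (intro sum.cong refl) (simp add: sum.union_disjoint[symmetric] Compl_partition)
  also have "(\<Sum>k\<in>Inl -` A. \<Sum>v\<in>Inr -` A. w (k, v)) = (\<Sum>v\<in>Inr -` A. \<Sum>k\<in>UNIV. w (k, v))"
    by (subst sum.swap) (intro sum.cong refl sum.mono_neutral_left, use entering in auto)
  also have "\<dots> = real (card (Inr -` A))" by (simp add: row)
  also have "(\<Sum>k\<in>Inl -` A. \<Sum>v\<in>- Inr -` A. w (k, v)) = (\<Sum>k\<in>Inl -` A. if k = a then w (a, b) else 0)"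
  proof (intro sum.cong refl)
    fix k assume "k \<in> Inl -` A"
    then have "(\<Sum>v\<in>- Inr -` A. w (k, v)) = (\<Sum>v\<in>- Inr -` A. if v = b \<and> k = a then w (a, b) else 0)"
      by (intro sum.cong refl) (use leaving in auto)
    also have "\<dots> = (if k = a then w (a, b) else 0)"
      using bridge by (cases "k = a") (simp_all add: sum.delta)
    finally show "(\<Sum>v\<in>- Inr -` A. w (k, v)) = (if k = a then w (a, b) else 0)" .
  qed
  also have "\<dots> = w (a, b)" by (simp add: A_def sum.delta)
  finally show ?thesis .
qed

lemma weights_of_fplus_edge:
  fixes \<Gamma> :: "('e::finite \<times> 'v::finite) set" and a :: 'e and b :: 'v
  defines "A \<equiv> bip_component (\<Gamma> - {(a, b)}) (Inl a)"
  assumes w: "weights_of \<Gamma> w (fplus f)" and bridge: "Inr b \<notin> A" and proper: "Inl k \<notin> A"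
  shows "w (a, b) = real (card (Inl -` A)) / real CARD('e)"
proof -
  define q where "q = real (card (Inl -` A)) / real CARD('e)"
  define m where "m = int (\<Sum>c\<in>Inl -` A. f c) - int (card (Inr -` A))"
  have "(\<Sum>c\<in>Inl -` A. fplus f $ c) = real (\<Sum>c\<in>Inl -` A. f c) + q"
    by (simp add: fplus_def sum.distrib q_def)
  then have int_diff: "w (a, b) - q = of_int m"
    using weights_of_component_sum[OF w bridge[unfolded A_def]] by (simp add: A_def m_def)
  have "a \<in> Inl -` A" by (simp add: A_def)
  then have "Inl -` A \<noteq> {}" by blast
  moreover have "Inl -` A \<subset> UNIV" using proper by blast
  then have "card (Inl -` A) < CARD('e)" by (rule psubset_card_mono[OF finite])
  ultimately have "0 < q" "q < 1" by (auto simp: q_def card_gt_0_iff)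
  moreover have "0 \<le> w (a, b)" "w (a, b) \<le> 1"
    using weights_of_nonneg[OF w] weights_of_le_one[OF w] by auto
  ultimately have "\<bar>of_int m :: real\<bar> < 1" unfolding int_diff[symmetric] by linarith
  then have "m = 0" by (simp flip: of_int_abs)
  then show ?thesis using int_diff by (simp add: q_def)
qed

lemma weights_of_shift_edge_weight:
  fixes \<Gamma> :: "('e::finite \<times> 'v::finite) set" and a :: 'e and b :: 'v
  defines "A \<equiv> bip_component (\<Gamma> - {(a, b)}) (Inl a)"
  assumes w: "weights_of \<Gamma> w x" and w': "weights_of \<Gamma> w' (x + t *\<^sub>R (axis a' 1 - axis a 1))"
    and bridge: "Inr b \<notin> A" and target: "Inl a' \<notin> A"
  shows "w' (a, b) = w (a, b) - t"
proof -
  have "(x + t *\<^sub>R (axis a' 1 - axis a 1)) $ k = x $ k + (if k = a' then t else 0) - (if k = a then t else 0)"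
    for k by (simp add: axis_def)
  moreover have "a \<in> Inl -` A" "a' \<notin> Inl -` A" using target by (auto simp: A_def)
  ultimately have "(\<Sum>k\<in>Inl -` A. (x + t *\<^sub>R (axis a' 1 - axis a 1)) $ k) = (\<Sum>k\<in>Inl -` A. x $ k) - t"
    by (simp add: sum.distrib sum_subtractf sum.delta)
  with weights_of_component_sum[OF w bridge[unfolded A_def]]
    weights_of_component_sum[OF w' bridge[unfolded A_def]]
  show ?thesis by (simp add: A_def)
qed

lemma weights_of_move_weight:
  fixes \<Gamma> :: "('e::finite \<times> 'v::finite) set"
  assumes w: "weights_of \<Gamma> w x" and edges: "(a, b) \<in> \<Gamma>" "(a', b) \<in> \<Gamma>" "a \<noteq> a'"
    and t: "0 \<le> t" "t \<le> w (a, b)"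
  defines "w' \<equiv> \<lambda>\<epsilon>. w \<epsilon> + (if \<epsilon> = (a', b) then t else 0) - (if \<epsilon> = (a, b) then t else 0)"
  shows "weights_of \<Gamma> w' (x + t *\<^sub>R (axis a' 1 - axis a 1))"
proof -
  have outside: "\<forall>\<epsilon>. \<epsilon> \<notin> \<Gamma> \<longrightarrow> w \<epsilon> = 0" and row: "\<forall>v. (\<Sum>e\<in>UNIV. w (e, v)) = 1"
    and coord: "\<forall>k. x $ k = (\<Sum>v\<in>UNIV. w (k, v))" and nonneg: "\<forall>\<epsilon>\<in>\<Gamma>. 0 \<le> w \<epsilon>"
    using w by (auto simp: weights_of_iff)
  have row': "(\<Sum>e\<in>UNIV. w' (e, v)) = 1" for v
    using row by (cases "v = b") (simp_all add: w'_def sum.distrib sum_subtractf sum.delta)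
  have coord': "(x + t *\<^sub>R (axis a' 1 - axis a 1)) $ k = (\<Sum>v\<in>UNIV. w' (k, v))" for k
  proof -
    have delta: "(\<Sum>v\<in>UNIV. if (k, v) = (c, b) then t else 0) = (if k = c then t else 0)" for c
      by (cases "k = c") (simp_all add: sum.delta)
    have "(\<Sum>v\<in>UNIV. w' (k, v)) = x $ k + (if k = a' then t else 0) - (if k = a then t else 0)"
      unfolding w'_def sum_subtractf sum.distrib delta coord[rule_format] ..
    then show ?thesis by (simp add: axis_def)
  qed
  show ?thesis unfolding weights_of_iff
  proof (intro conjI allI ballI impI)
    show "0 \<le> w' \<epsilon>" if "\<epsilon> \<in> \<Gamma>" for \<epsilon>
      using that nonneg t edges(3) by (auto simp: w'_def)
    show "w' \<epsilon> = 0" if "\<epsilon> \<notin> \<Gamma>" for \<epsilon>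
      using that outside edges by (cases \<epsilon>) (auto simp: w'_def)
  qed (use row' coord' in auto)
qed

lemma weights_of_shift_along_path:
  fixes \<Gamma> :: "('e::finite \<times> 'v::finite) set"
  assumes "is_path \<Gamma> q (Inl a) (Inl b)" and "weights_of \<Gamma> w x" and "0 \<le> t"
    and "\<And>i a' b'. Suc i < length q \<Longrightarrow> q ! i = Inl a' \<Longrightarrow> q ! Suc i = Inr b' \<Longrightarrow> t \<le> w (a', b')"
  shows "\<exists>w'. weights_of \<Gamma> w' (x + t *\<^sub>R (axis b 1 - axis a 1))"
  using assms
proof (induction "length q" arbitrary: q a w x rule: less_induct)
  case less
  note q = less.prems(1) and w = less.prems(2)
  have dist: "distinct q" using q by (simp add: is_path_def)
  show ?case
  proof (cases "a = b")
    case True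
    with w show ?thesis by auto
  next
    case False
    with q obtain b1 a2 where "Suc 1 < length q" and q1: "q ! 1 = Inr b1" and q2: "q ! 2 = Inl a2"
      and ab1: "(a, b1) \<in> \<Gamma>" and a2b1: "(a2, b1) \<in> \<Gamma>" and "a \<noteq> a2"
      by (rule is_path_Inl_first_two_steps)
    have "t \<le> w (a, b1)" using less.prems(4)[of 0] is_path_first[OF q] q1 \<open>Suc 1 < length q\<close> by simp
    define w1 where "w1 \<epsilon> = w \<epsilon> + (if \<epsilon> = (a2, b1) then t else 0) - (if \<epsilon> = (a, b1) then t else 0)" for \<epsilon>
    have w1: "weights_of \<Gamma> w1 (x + t *\<^sub>R (axis a2 1 - axis a 1))"
      unfolding w1_def
      by (rule weights_of_move_weight[OF w ab1 a2b1 \<open>a \<noteq> a2\<close> less.prems(3) \<open>t \<le> w (a, b1)\<close>])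
    have q': "is_path \<Gamma> (drop 2 q) (Inl a2) (Inl b)"
      using is_path_drop[OF q, of 2] q2 \<open>Suc 1 < length q\<close> by simp
    have "\<exists>w'. weights_of \<Gamma> w' ((x + t *\<^sub>R (axis a2 1 - axis a 1)) + t *\<^sub>R (axis b 1 - axis a2 1))"
    proof (rule less.hyps[OF _ q' w1 less.prems(3)])
      show "length (drop 2 q) < length q" using \<open>Suc 1 < length q\<close> by simp
      fix i a' b' assume i: "Suc i < length (drop 2 q)" "drop 2 q ! i = Inl a'" "drop 2 q ! Suc i = Inr b'"
      then have later: "Suc (i + 2) < length q" "q ! (i + 2) = Inl a'" "q ! Suc (i + 2) = Inr b'"
        by (simp_all add: add.commute)
      then have "q ! Suc (i + 2) \<noteq> q ! 1" using nth_eq_iff_index_eq[OF dist, of "Suc (i + 2)" 1] by simp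
      then have "b' \<noteq> b1" using later(3) q1 by auto
      with less.prems(4)[OF later] show "t \<le> w1 (a', b')" by (simp add: w1_def)
    qed
    then show ?thesis by (simp add: algebra_simps)
  qed
qed

lemma weights_of_fplus_first_edge_le:
  fixes \<Gamma> :: "('e::finite \<times> 'v::finite) set"
  assumes st: "spanning_tree G \<Gamma>" and p: "is_path \<Gamma> p (Inl e) (Inl e')" and "e \<noteq> e'"
    and v1: "p ! 1 = Inr v1" and w: "weights_of \<Gamma> w (fplus f)"
    and i: "Suc i < length p" "p ! i = Inl a" "p ! Suc i = Inr b"
  shows "w (e, v1) \<le> w (a, b)"
proof (cases "i = 0")
  case True
  then show ?thesis using i v1 is_path_first[OF p] by simp
next
  case False
  define A1 where "A1 = bip_component (\<Gamma> - {(e, v1)}) (Inl e)"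
  define A where "A = bip_component (\<Gamma> - {(a, b)}) (Inl a)"
  have first: "Suc 0 < length p" "p ! 0 = Inl e" "p ! Suc 0 = Inr v1"
    using i v1 is_path_first[OF p] by simp_all
  have "(a, b) \<in> \<Gamma>"
    using is_path_adj[OF p i(1)] i by (simp add: bip_adj_def)
  then have bridge: "Inr b \<notin> A"
    unfolding A_def by (rule spanning_tree_bridge[OF st])
  have bridge1: "Inr v1 \<notin> A1" and "Inl e' \<notin> A1"
    using spanning_tree_path_first_edge[OF st p \<open>e \<noteq> e'\<close> v1] unfolding A1_def by simp_all
  have "Inl e \<in> A" "Inl e' \<notin> A"
    using spanning_tree_path_step_separates[OF st p i] unfolding A_def by simp_all
  have "p ! i \<in> bip_component (\<Gamma> - {(e, v1)}) (p ! 1)"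
    by (rule is_path_component_Diff_step[OF p first]) (use False i in auto)
  then have "Inl a \<notin> A1"
    using bridge1 i v1 unfolding A1_def by (metis bip_component_sym bip_component_trans)
  then have "A1 \<subseteq> bip_component (\<Gamma> - {(e, v1)} - {(a, b)}) (Inl e)"
    unfolding A1_def by (rule bip_component_Diff_edge)
  also have "\<dots> \<subseteq> bip_component (\<Gamma> - {(a, b)}) (Inl e)"
    by (rule bip_component_mono) blast
  also have "\<dots> = A"
    using bip_component_eq \<open>Inl e \<in> A\<close> unfolding A_def by blast
  finally have "card (Inl -` A1) \<le> card (Inl -` A)"
    by (intro card_mono) auto
  then show ?thesis
    using weights_of_fplus_edge[OF w] bridge1 bridge \<open>Inl e' \<notin> A1\<close> \<open>Inl e' \<notin> A\<close>
    unfolding A1_def A_def by (simp add: divide_right_mono)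
qed

lemma fplus_segment:
  assumes "\<And>x. int (g x) = int (f x) - (if x = e then 1 else 0) + (if x = e' then 1 else 0)"
  shows "(1 - t) *\<^sub>R fplus f + t *\<^sub>R fplus g = fplus f + t *\<^sub>R (axis e' 1 - axis e 1)"
proof -
  have g: "real (g x) = real (f x) - (if x = e then 1 else 0) + (if x = e' then 1 else 0)" for x
    using arg_cong[OF assms[of x], of real_of_int] by simp
  show ?thesis
    unfolding vec_eq_iff
  proof
    fix x
    show "((1 - t) *\<^sub>R fplus f + t *\<^sub>R fplus g) $ x = (fplus f + t *\<^sub>R (axis e' 1 - axis e 1)) $ x"
      by (cases "x = e"; cases "x = e'") (simp_all add: fplus_def axis_def g algebra_simps)
  qed
qed

theorem lemma4p3:
  fixes G \<Gamma> :: "('e::finite \<times> 'v::finite) set"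
    and f g :: "'e \<Rightarrow> nat" and e e' :: 'e and p :: "('e + 'v) list" and v1 :: 'v
  assumes "bip_connected G"
    and "hypertree G f" and "hypertree G g"
    and "e \<noteq> e'"
    and "\<And>x. int (g x) = int (f x) - (if x = e then 1 else 0) + (if x = e' then 1 else 0)"
    and "spanning_tree G \<Gamma>" and "induces \<Gamma> f"
    and "fplus f \<in> rel_interior (Mcell \<Gamma>)"
    and "is_path \<Gamma> p (Inl e) (Inl e')" and "p ! 1 = Inr v1"
  shows "\<exists>t\<in>{0..<1}. (1 - t) *\<^sub>R fplus f + t *\<^sub>R fplus g \<in> Mcell \<Gamma> \<and>
           (\<forall>s\<in>{t<..1}. (1 - s) *\<^sub>R fplus f + s *\<^sub>R fplus g \<notin> Mcell \<Gamma>) \<and>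
           (\<forall>w. weights_of \<Gamma> w ((1 - t) *\<^sub>R fplus f + t *\<^sub>R fplus g) \<longrightarrow> w (e, v1) = 0)"
proof -
  note st = assms(6) and p = assms(9)
  define A1 where "A1 = bip_component (\<Gamma> - {(e, v1)}) (Inl e)"
  have bridge: "Inr v1 \<notin> A1" and target: "Inl e' \<notin> A1"
    using spanning_tree_path_first_edge[OF st p assms(4,10)] unfolding A1_def by simp_all
  obtain w0 where w0: "weights_of \<Gamma> w0 (fplus f)"
    using assms(8) rel_interior_subset Mcell_iff_weights_of by blast
  define c where "c = w0 (e, v1)"
  have "c = real (card (Inl -` A1)) / real CARD('e)"
    using weights_of_fplus_edge[OF w0] bridge target unfolding A1_def c_def by simp
  moreover have "card (Inl -` A1) < CARD('e)"
    using target by (intro psubset_card_mono) auto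
  ultimately have "c \<in> {0..<1}" by (simp add: c_def weights_of_nonneg[OF w0])
  have moved: "weights_of \<Gamma> w ((1 - s) *\<^sub>R fplus f + s *\<^sub>R fplus g) \<Longrightarrow> w (e, v1) = c - s" for w s
    using weights_of_shift_edge_weight[OF w0] bridge target
    unfolding fplus_segment[OF assms(5)] A1_def c_def by blast
  have "\<exists>w. weights_of \<Gamma> w ((1 - c) *\<^sub>R fplus f + c *\<^sub>R fplus g)"
    unfolding fplus_segment[OF assms(5)]
    by (rule weights_of_shift_along_path[OF p w0])
       (use \<open>c \<in> {0..<1}\<close> weights_of_fplus_first_edge_le[OF st p assms(4,10) w0] in \<open>auto simp: c_def\<close>)
  moreover have "(1 - s) *\<^sub>R fplus f + s *\<^sub>R fplus g \<notin> Mcell \<Gamma>" if "s \<in> {c<..1}" for s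
  proof
    assume "(1 - s) *\<^sub>R fplus f + s *\<^sub>R fplus g \<in> Mcell \<Gamma>"
    then obtain w where w: "weights_of \<Gamma> w ((1 - s) *\<^sub>R fplus f + s *\<^sub>R fplus g)"
      unfolding Mcell_iff_weights_of ..
    show False using moved[OF w] weights_of_nonneg[OF w, of "(e, v1)"] that by simp
  qed
  moreover have "w (e, v1) = 0" if "weights_of \<Gamma> w ((1 - c) *\<^sub>R fplus f + c *\<^sub>R fplus g)" for w
    using moved[OF that] by simp
  ultimately show ?thesis
    using \<open>c \<in> {0..<1}\<close> unfolding Mcell_iff_weights_of by blast
qed

end
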